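(* Let $G=(V,E)$ be a finite, connected graph with vertex set $V=\{v_1,\dots,v_n\}$, let $W:V\to\mathbb{R}$ be an arbitrary potential, and let $L=D-A$ be the graph Laplacian, where $D$ is the diagonal degree matrix and $A$ is the adjacency matrix. Suppose $\phi:V\to\mathbb{R}$ and $E\in\mathbb{R}$ satisfy $L\phi+W\phi=E\phi$. Then for all $v\in V$, $$|\phi(v)|\le e^{-\rho_E(v)}\cdot\|\phi\|_{\ell^\infty},$$ where $$\rho_E(v)=\inf\left\{\sum_{i=1}^{\ell}\log\left(1+\frac{(W(v_i)-E)_+}{\deg(v_i)}\right): v=v_1\to v_2\to\dots\to v_\ell \text{ is a path in } G \text{ with } W(v_\ell)\le E\right\},$$ and $(x)_+=\max\{x,0\}$.
   Context: $D\in\mathbb{R}^{n\times n}$ is diagonal with $d_{ii}=\deg(v_i)$; $A_{ij}=1$ if $(v_i,v_j)\in E$ and $0$ otherwise; $(W\phi)(v)=W(v)\phi(v)$. The infimum in $\rho_E(v)$ ranges over all paths starting at $v$ and ending at some vertex in the "allowed region" $\{u\in V: W(u)\le E\}$ (in particular $\rho_E(v)=0$ if $W(v)\le E$). $\|\phi\|_{\ell^\infty}=\max_{u\in V}|\phi(u)|$. *)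

theory Defs
  imports "HOL-Library.Extended_Real"
begin

definition finite_connected_graph :: "'a set \<Rightarrow> ('a \<Rightarrow> 'a \<Rightarrow> bool) \<Rightarrow> bool" where
  "finite_connected_graph V Adj \<longleftrightarrow>
     finite V \<and> V \<noteq> {} \<and>
     (\<forall>u w. Adj u w \<longrightarrow> u \<in> V \<and> w \<in> V) \<and>
     (\<forall>u w. Adj u w \<longrightarrow> Adj w u) \<and>
     (\<forall>u. \<not> Adj u u) \<and>
     (\<forall>u\<in>V. \<forall>w\<in>V. (u, w) \<in> {(x, y). Adj x y}\<^sup>*)"

definition deg :: "'a set \<Rightarrow> ('a \<Rightarrow> 'a \<Rightarrow> bool) \<Rightarrow> 'a \<Rightarrow> nat" where
  "deg V Adj v = card {u \<in> V. Adj v u}"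

definition laplacian :: "'a set \<Rightarrow> ('a \<Rightarrow> 'a \<Rightarrow> bool) \<Rightarrow> ('a \<Rightarrow> real) \<Rightarrow> 'a \<Rightarrow> real" where
  "laplacian V Adj \<phi> v = real (deg V Adj v) * \<phi> v - (\<Sum>u\<in>{u \<in> V. Adj v u}. \<phi> u)"

definition is_path :: "'a set \<Rightarrow> ('a \<Rightarrow> 'a \<Rightarrow> bool) \<Rightarrow> 'a list \<Rightarrow> bool" where
  "is_path V Adj p \<longleftrightarrow> p \<noteq> [] \<and> set p \<subseteq> V \<and> distinct p \<and>
     (\<forall>i. Suc i < length p \<longrightarrow> Adj (p ! i) (p ! Suc i))"

definition pos_part :: "real \<Rightarrow> real" where
  "pos_part x = max x 0"

(* Agmon-type distance rho_E(v), as an infimum in the extended reals (Inf {} = \<infinity>) *)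
definition rho :: "'a set \<Rightarrow> ('a \<Rightarrow> 'a \<Rightarrow> bool) \<Rightarrow> ('a \<Rightarrow> real) \<Rightarrow> real \<Rightarrow> 'a \<Rightarrow> ereal" where
  "rho V Adj W E v = Inf {ereal (\<Sum>i<length p. ln (1 + pos_part (W (p ! i) - E) / real (deg V Adj (p ! i))))
       | p. is_path V Adj p \<and> hd p = v \<and> W (last p) \<le> E}"

definition exp_neg :: "ereal \<Rightarrow> real" where
  "exp_neg r = (case r of ereal x \<Rightarrow> exp (- x) | PInfty \<Rightarrow> 0 | MInfty \<Rightarrow> 0)"

definition sup_norm :: "'a set \<Rightarrow> ('a \<Rightarrow> real) \<Rightarrow> real" where
  "sup_norm V \<phi> = Max ((\<lambda>u. \<bar>\<phi> u\<bar>) ` V)"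

end

theory Submission
  imports Defs Complex_Main
begin

text \<open>
  \<open>\<rho>\<^sub>E(v)\<close> is the least cost of a path from \<open>v\<close> into the allowed region \<open>{W \<le> E}\<close>,
  a vertex costing \<open>c(v) = log (1 + (W(v) - E)\<^sub>+ / deg v)\<close>. Hence \<open>\<rho>\<^sub>E\<close> vanishes on the
  allowed region and \<open>\<rho>\<^sub>E(v) \<le> \<rho>\<^sub>E(u) + c(v)\<close> for every neighbour \<open>u\<close> of \<open>v\<close>.
  At a vertex \<open>v\<close> of the forbidden region the eigenvalue equation reads
  \<open>deg v \<cdot> exp (c(v)) \<cdot> \<phi>(v) = \<Sum>\<^bsub>u \<sim> v\<^esub> \<phi>(u)\<close>. So if \<open>r(v) < r(u) + c(v)\<close> for all
  such edges, \<open>|\<phi>| \<cdot> exp r\<close> cannot attain a positive maximum in the forbidden region, and it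
  is bounded by \<open>\<parallel>\<phi>\<parallel>\<^sub>\<infinity>\<close> as soon as \<open>r \<le> 0\<close> on the allowed region. The inequality for
  \<open>\<rho>\<^sub>E\<close> is not strict, so apply this to \<open>r = (1 - \<epsilon>) \<rho>\<^sub>E\<close> and let \<open>\<epsilon> \<rightarrow> 0\<close>.
\<close>

lemma successively_iff_nth:
  "successively P xs \<longleftrightarrow> (\<forall>i. Suc i < length xs \<longrightarrow> P (xs ! i) (xs ! Suc i))"
proof (induction P xs rule: successively.induct)
  case (3 P x y xs)
  then show ?case by (auto simp: nth_Cons split: nat.splits)
qed auto

lemma is_path_iff_successively:
  "is_path V Adj p \<longleftrightarrow> p \<noteq> [] \<and> set p \<subseteq> V \<and> distinct p \<and> successively Adj p"
  by (simp add: is_path_def successively_iff_nth)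

lemma is_path_suffix:
  assumes "is_path V Adj (xs @ ys)" "ys \<noteq> []"
  shows "is_path V Adj ys"
  using assms by (auto simp: is_path_iff_successively successively_append_iff)

lemma is_path_ConsI:
  assumes "is_path V Adj p" "x \<in> V" "x \<notin> set p" "Adj x (hd p)"
  shows "is_path V Adj (x # p)"
  using assms by (auto simp: is_path_iff_successively successively_Cons)

lemma rtrancl_imp_is_path:
  assumes "(x, a) \<in> {(x, y). Adj x y}\<^sup>*" "a \<in> V" "\<And>u w. Adj u w \<Longrightarrow> u \<in> V"
  shows "\<exists>p. is_path V Adj p \<and> hd p = x \<and> last p = a"
  using assms(1)
proof (induction rule: converse_rtrancl_induct)
  case base
  show ?case using assms(2) by (intro exI[of _ "[a]"]) (simp add: is_path_def)
next
  case (step x y)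
  then obtain p where p: "is_path V Adj p" "hd p = y" "last p = a" by blast
  show ?case
  proof (cases "x \<in> set p")
    case True
    then obtain xs ys where "p = xs @ x # ys" by (meson split_list)
    then show ?thesis
      using p is_path_suffix[of V Adj xs "x # ys"] by (intro exI[of _ "x # ys"]) auto
  next
    case False
    have "x \<in> V" using step(1) assms(3) by blast
    then have "is_path V Adj (x # p)" using p False step(1) by (intro is_path_ConsI) auto
    then show ?thesis using p by (intro exI[of _ "x # p"]) (auto simp: is_path_def)
  qed
qed

definition paths_to :: "'a set \<Rightarrow> ('a \<Rightarrow> 'a \<Rightarrow> bool) \<Rightarrow> 'a set \<Rightarrow> 'a \<Rightarrow> 'a list set" where
  "paths_to V Adj T v = {p. is_path V Adj p \<and> hd p = v \<and> last p \<in> T}"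

text \<open>Real-valued, unlike \<^const>\<open>rho\<close>: it is meaningless when there is no path, as
  \<open>Inf {} :: real\<close> is unspecified.\<close>
definition min_path_cost ::
    "'a set \<Rightarrow> ('a \<Rightarrow> 'a \<Rightarrow> bool) \<Rightarrow> ('a \<Rightarrow> real) \<Rightarrow> 'a set \<Rightarrow> 'a \<Rightarrow> real" where
  "min_path_cost V Adj c T v = Inf ((\<lambda>p. \<Sum>x\<leftarrow>p. c x) ` paths_to V Adj T v)"

lemma paths_to_nonempty:
  assumes "finite_connected_graph V Adj" "a \<in> V" "a \<in> T" "v \<in> V"
  shows "paths_to V Adj T v \<noteq> {}"
proof -
  have "(v, a) \<in> {(x, y). Adj x y}\<^sup>*" "\<And>u w. Adj u w \<Longrightarrow> u \<in> V"
    using assms by (auto simp: finite_connected_graph_def)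
  then obtain p where "is_path V Adj p" "hd p = v" "last p = a"
    using rtrancl_imp_is_path \<open>a \<in> V\<close> by metis
  then show ?thesis using \<open>a \<in> T\<close> by (auto simp: paths_to_def)
qed

context
  fixes c :: "'a \<Rightarrow> real"
  assumes cost_nonneg: "\<And>x. 0 \<le> c x"
begin

lemma min_path_cost_le:
  assumes "p \<in> paths_to V Adj T v"
  shows "min_path_cost V Adj c T v \<le> (\<Sum>x\<leftarrow>p. c x)"
  unfolding min_path_cost_def
  by (rule cInf_lower) (use assms cost_nonneg in \<open>auto intro!: bdd_belowI[of _ 0] sum_list_nonneg\<close>)

lemma min_path_cost_nonneg:
  assumes "paths_to V Adj T v \<noteq> {}"
  shows "0 \<le> min_path_cost V Adj c T v"
  unfolding min_path_cost_def
  by (rule cInf_greatest) (use assms cost_nonneg in \<open>auto intro!: sum_list_nonneg\<close>)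

lemma min_path_cost_target:
  assumes "v \<in> V" "v \<in> T"
  shows "min_path_cost V Adj c T v \<le> c v"
  using min_path_cost_le[of "[v]"] assms by (simp add: paths_to_def is_path_def)

lemma min_path_cost_Adj:
  assumes "v \<in> V" "Adj v u" "paths_to V Adj T u \<noteq> {}"
  shows "min_path_cost V Adj c T v \<le> min_path_cost V Adj c T u + c v"
proof -
  have "min_path_cost V Adj c T v - c v \<le> (\<Sum>x\<leftarrow>p. c x)" if p: "p \<in> paths_to V Adj T u" for p
  proof (cases "v \<in> set p")
    case True
    then obtain xs ys where split: "p = xs @ v # ys" by (meson split_list)
    then have "v # ys \<in> paths_to V Adj T v"
      using p is_path_suffix[of V Adj xs "v # ys"] by (auto simp: paths_to_def)
    then have "min_path_cost V Adj c T v \<le> (\<Sum>x\<leftarrow>v # ys. c x)" by (rule min_path_cost_le)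
    also have "\<dots> \<le> (\<Sum>x\<leftarrow>p. c x)" using split cost_nonneg by (auto intro!: sum_list_nonneg)
    finally show ?thesis using cost_nonneg[of v] by simp
  next
    case False
    with p assms have "is_path V Adj (v # p)" by (auto simp: paths_to_def intro: is_path_ConsI)
    with p have "v # p \<in> paths_to V Adj T v" by (auto simp: paths_to_def is_path_def)
    then show ?thesis using min_path_cost_le by fastforce
  qed
  then have "min_path_cost V Adj c T v - c v \<le> min_path_cost V Adj c T u"
    unfolding min_path_cost_def[of V Adj c T u] using assms(3) by (auto intro!: cInf_greatest)
  then show ?thesis by simp
qed

end

definition agmon_weight :: "'a set \<Rightarrow> ('a \<Rightarrow> 'a \<Rightarrow> bool) \<Rightarrow> ('a \<Rightarrow> real) \<Rightarrow> real \<Rightarrow> 'a \<Rightarrow> real" where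
  "agmon_weight V Adj W E v = ln (1 + pos_part (W v - E) / real (deg V Adj v))"

lemma agmon_weight_nonneg: "0 \<le> agmon_weight V Adj W E v"
  by (simp add: agmon_weight_def pos_part_def)

lemma agmon_weight_eq_0: "W v \<le> E \<Longrightarrow> agmon_weight V Adj W E v = 0"
  by (simp add: agmon_weight_def pos_part_def)

lemma deg_pos:
  assumes "finite V" "u \<in> V" "Adj v u"
  shows "0 < deg V Adj v"
  using assms by (auto simp: deg_def card_gt_0_iff)

lemma agmon_weight_pos:
  assumes "finite V" "u \<in> V" "Adj v u" "E < W v"
  shows "0 < agmon_weight V Adj W E v"
  using assms deg_pos[of V u Adj v] by (simp add: agmon_weight_def pos_part_def ln_gt_zero)

lemma rho_eq_min_path_cost:
  assumes "paths_to V Adj {u. W u \<le> E} v \<noteq> {}"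
  shows "rho V Adj W E v = ereal (min_path_cost V Adj (agmon_weight V Adj W E) {u. W u \<le> E} v)"
proof -
  let ?cost = "\<lambda>p. \<Sum>x\<leftarrow>p. agmon_weight V Adj W E x"
  have "rho V Adj W E v = Inf (ereal ` ?cost ` paths_to V Adj {u. W u \<le> E} v)"
    unfolding rho_def paths_to_def agmon_weight_def
    by (auto simp: sum_list_sum_nth atLeast0LessThan intro!: arg_cong[where f = Inf])
  also have "\<dots> = ereal (Inf (?cost ` paths_to V Adj {u. W u \<le> E} v))"
    using assms
    by (intro ereal_Inf'[symmetric])
      (auto intro!: bdd_belowI[of _ 0] sum_list_nonneg agmon_weight_nonneg)
  finally show ?thesis by (simp add: min_path_cost_def)
qed

lemma eigenfunction_vanishes_at_forbidden_max:
  fixes r :: "'a \<Rightarrow> real"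
  assumes "finite V" "v \<in> V" "E < W v"
    and eigen: "laplacian V Adj \<phi> v + W v * \<phi> v = E * \<phi> v"
    and sub: "\<And>u. u \<in> V \<Longrightarrow> Adj v u \<Longrightarrow> r v < r u + agmon_weight V Adj W E v"
    and max: "\<And>u. u \<in> V \<Longrightarrow> \<bar>\<phi> u\<bar> * exp (r u) \<le> \<bar>\<phi> v\<bar> * exp (r v)"
  shows "\<phi> v = 0"
proof (rule ccontr)
  assume "\<phi> v \<noteq> 0"
  define N where "N = {u \<in> V. Adj v u}"
  define d where "d = real (deg V Adj v)"
  have d: "d = real (card N)" and "finite N"
    using \<open>finite V\<close> by (simp_all add: d_def N_def deg_def)
  have balance: "(d + W v - E) * \<phi> v = (\<Sum>u\<in>N. \<phi> u)"
    using eigen by (simp add: laplacian_def d_def N_def algebra_simps)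
  show False
  proof (cases "N = {}")
    case True
    then show False using balance d \<open>E < W v\<close> \<open>\<phi> v \<noteq> 0\<close> by simp
  next
    case False
    then have "0 < d" using d \<open>finite N\<close> by (simp add: card_gt_0_iff)
    have weight: "exp (agmon_weight V Adj W E v) = (d + W v - E) / d"
      using \<open>0 < d\<close> \<open>E < W v\<close> by (simp add: agmon_weight_def pos_part_def d_def field_simps)
    have "\<bar>\<phi> u\<bar> < \<bar>\<phi> v\<bar> * ((d + W v - E) / d)" if "u \<in> N" for u
    proof -
      have "r v < r u + agmon_weight V Adj W E v" using sub that by (simp add: N_def)
      have "\<bar>\<phi> u\<bar> = \<bar>\<phi> u\<bar> * exp (r u) * exp (- r u)" by (simp add: exp_minus)
      also have "\<dots> \<le> \<bar>\<phi> v\<bar> * exp (r v) * exp (- r u)"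
        using max that by (simp add: N_def)
      also have "\<dots> < \<bar>\<phi> v\<bar> * exp (r v) * exp (agmon_weight V Adj W E v - r v)"
        using \<open>r v < r u + agmon_weight V Adj W E v\<close> \<open>\<phi> v \<noteq> 0\<close> by simp
      also have "\<dots> = \<bar>\<phi> v\<bar> * ((d + W v - E) / d)"
        by (simp add: exp_diff weight)
      finally show ?thesis .
    qed
    then have "(\<Sum>u\<in>N. \<bar>\<phi> u\<bar>) < (\<Sum>u\<in>N. \<bar>\<phi> v\<bar> * ((d + W v - E) / d))"
      using \<open>finite N\<close> False by (intro sum_strict_mono) auto
    also have "\<dots> = \<bar>(d + W v - E) * \<phi> v\<bar>"
      using d \<open>0 < d\<close> \<open>E < W v\<close> by (simp add: abs_mult)
    also have "\<dots> \<le> (\<Sum>u\<in>N. \<bar>\<phi> u\<bar>)"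
      unfolding balance by (rule sum_abs)
    finally show False by simp
  qed
qed

lemma eigenfunction_max_principle:
  fixes r :: "'a \<Rightarrow> real"
  assumes "finite V" "0 \<le> K"
    and eigen: "\<forall>v\<in>V. laplacian V Adj \<phi> v + W v * \<phi> v = E * \<phi> v"
    and allowed: "\<And>u. u \<in> V \<Longrightarrow> W u \<le> E \<Longrightarrow> \<bar>\<phi> u\<bar> * exp (r u) \<le> K"
    and sub: "\<And>v u. v \<in> V \<Longrightarrow> u \<in> V \<Longrightarrow> Adj v u \<Longrightarrow> E < W v \<Longrightarrow>
                r v < r u + agmon_weight V Adj W E v"
    and "v \<in> V"
  shows "\<bar>\<phi> v\<bar> * exp (r v) \<le> K"
proof -
  let ?f = "\<lambda>u. \<bar>\<phi> u\<bar> * exp (r u)"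
  obtain v0 where "v0 \<in> V" and v0_Max: "Max (?f ` V) = ?f v0"
    using obtains_MAX[OF \<open>finite V\<close>] \<open>v \<in> V\<close> by blast
  have v0_max: "?f u \<le> ?f v0" if "u \<in> V" for u
    unfolding v0_Max[symmetric] using \<open>finite V\<close> that by (intro Max_ge) auto
  have "?f v0 \<le> K"
  proof (cases "W v0 \<le> E")
    case False
    then have "\<phi> v0 = 0"
      using eigenfunction_vanishes_at_forbidden_max[of V v0 E W Adj \<phi> r] assms(1) \<open>v0 \<in> V\<close>
        v0_max eigen sub
      by simp
    then show ?thesis using \<open>0 \<le> K\<close> by simp
  qed (use allowed \<open>v0 \<in> V\<close> in auto)
  then show ?thesis using v0_max \<open>v \<in> V\<close> by (meson order_trans)
qed

lemma eigenfunction_eq_0_if_forbidden: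
  assumes "finite V" "\<forall>v\<in>V. laplacian V Adj \<phi> v + W v * \<phi> v = E * \<phi> v"
    and "\<forall>u\<in>V. E < W u" "v \<in> V"
  shows "\<phi> v = 0"
proof -
  have "\<bar>\<phi> v\<bar> * exp 0 \<le> 0"
    by (rule eigenfunction_max_principle[where r = "\<lambda>_. 0" and V = V and Adj = Adj and W = W])
      (use assms agmon_weight_pos[of V] in auto)
  then show ?thesis by simp
qed

lemma mult_exp_le_if_scaled_le:
  fixes a x M :: real
  assumes "\<And>\<epsilon>. 0 < \<epsilon> \<Longrightarrow> \<epsilon> < 1 \<Longrightarrow> a * exp ((1 - \<epsilon>) * x) \<le> M"
  shows "a * exp x \<le> M"
proof (rule tendsto_upperbound)
  show "((\<lambda>\<epsilon>. a * exp ((1 - \<epsilon>) * x)) \<longlongrightarrow> a * exp x) (at_right 0)"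
    by (auto intro!: tendsto_eq_intros)
  show "\<forall>\<^sub>F \<epsilon> in at_right 0. a * exp ((1 - \<epsilon>) * x) \<le> M"
    unfolding eventually_at_right_field using assms by (intro exI[of _ 1]) auto
qed simp

lemma eigenfunction_agmon_decay:
  assumes "finite V" and eigen: "\<forall>v\<in>V. laplacian V Adj \<phi> v + W v * \<phi> v = E * \<phi> v"
    and bound: "\<And>u. u \<in> V \<Longrightarrow> \<bar>\<phi> u\<bar> \<le> M"
    and reach: "\<And>u. u \<in> V \<Longrightarrow> paths_to V Adj {u. W u \<le> E} u \<noteq> {}"
    and "v \<in> V"
  shows "\<bar>\<phi> v\<bar> * exp (min_path_cost V Adj (agmon_weight V Adj W E) {u. W u \<le> E} v) \<le> M"
proof -
  define R where "R = min_path_cost V Adj (agmon_weight V Adj W E) {u. W u \<le> E}"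
  have R_nonneg: "0 \<le> R u" if "u \<in> V" for u
    unfolding R_def
    by (rule min_path_cost_nonneg[where c = "agmon_weight V Adj W E",
          OF agmon_weight_nonneg reach[OF that]])
  have R_allowed: "R u \<le> 0" if "u \<in> V" "W u \<le> E" for u
    using min_path_cost_target[where c = "agmon_weight V Adj W E", OF agmon_weight_nonneg, of u V]
      agmon_weight_eq_0[of W u E V Adj] that
    by (simp add: R_def)
  have R_Adj: "R v \<le> R u + agmon_weight V Adj W E v" if "v \<in> V" "Adj v u" "u \<in> V" for u v
    unfolding R_def
    by (rule min_path_cost_Adj[where c = "agmon_weight V Adj W E",
          OF agmon_weight_nonneg that(1,2) reach[OF that(3)]])
  have "\<bar>\<phi> v\<bar> * exp ((1 - \<epsilon>) * R v) \<le> M" if "0 < \<epsilon>" "\<epsilon> < 1" for \<epsilon>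
  proof (rule eigenfunction_max_principle[where r = "\<lambda>u. (1 - \<epsilon>) * R u",
        OF \<open>finite V\<close> _ eigen])
    show "0 \<le> M" using bound[OF \<open>v \<in> V\<close>] by linarith
    show "\<bar>\<phi> u\<bar> * exp ((1 - \<epsilon>) * R u) \<le> M" if "u \<in> V" "W u \<le> E" for u
      using R_nonneg[of u] R_allowed[of u] bound[of u] that by simp
    show "(1 - \<epsilon>) * R w < (1 - \<epsilon>) * R u + agmon_weight V Adj W E w"
      if "w \<in> V" "u \<in> V" "Adj w u" "E < W w" for w u
    proof -
      have "(1 - \<epsilon>) * R w \<le> (1 - \<epsilon>) * (R u + agmon_weight V Adj W E w)"
        using R_Adj[of w u] that \<open>\<epsilon> < 1\<close> by (intro mult_left_mono) auto
      also have "\<dots> < (1 - \<epsilon>) * R u + agmon_weight V Adj W E w"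
        using agmon_weight_pos[of V u Adj w E W] that \<open>finite V\<close> \<open>0 < \<epsilon>\<close>
        by (simp add: algebra_simps)
      finally show ?thesis .
    qed
  qed (fact \<open>v \<in> V\<close>)
  then show ?thesis unfolding R_def[symmetric] by (rule mult_exp_le_if_scaled_le)
qed

lemma exp_neg_nonneg: "0 \<le> exp_neg r"
  by (cases r) (simp_all add: exp_neg_def)

lemma abs_le_sup_norm: "finite V \<Longrightarrow> u \<in> V \<Longrightarrow> \<bar>\<phi> u\<bar> \<le> sup_norm V \<phi>"
  by (simp add: sup_norm_def)

theorem mainTheorem1:
  fixes V :: "'a set" and Adj :: "'a \<Rightarrow> 'a \<Rightarrow> bool"
    and W :: "'a \<Rightarrow> real" and \<phi> :: "'a \<Rightarrow> real" and E :: real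
  assumes "finite_connected_graph V Adj"
    and "\<forall>v\<in>V. laplacian V Adj \<phi> v + W v * \<phi> v = E * \<phi> v"
  shows "\<forall>v\<in>V. \<bar>\<phi> v\<bar> \<le> exp_neg (rho V Adj W E v) * sup_norm V \<phi>"
proof
  fix v assume "v \<in> V"
  have "finite V" using assms(1) by (simp add: finite_connected_graph_def)
  note bound = abs_le_sup_norm[OF \<open>finite V\<close>, of _ \<phi>]
  show "\<bar>\<phi> v\<bar> \<le> exp_neg (rho V Adj W E v) * sup_norm V \<phi>"
  proof (cases "\<exists>a\<in>V. W a \<le> E")
    case False
    then have "\<forall>u\<in>V. E < W u" by auto
    then have "\<phi> v = 0"
      by (rule eigenfunction_eq_0_if_forbidden[OF \<open>finite V\<close> assms(2) _ \<open>v \<in> V\<close>])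
    then show ?thesis using exp_neg_nonneg bound[OF \<open>v \<in> V\<close>] by simp
  next
    case True
    then obtain a where "a \<in> V" "a \<in> {u. W u \<le> E}" by blast
    then have reach: "paths_to V Adj {u. W u \<le> E} u \<noteq> {}" if "u \<in> V" for u
      by (rule paths_to_nonempty[OF assms(1) _ _ that])
    define R where "R = min_path_cost V Adj (agmon_weight V Adj W E) {u. W u \<le> E} v"
    have decay: "\<bar>\<phi> v\<bar> * exp R \<le> sup_norm V \<phi>"
      unfolding R_def
      by (rule eigenfunction_agmon_decay[OF \<open>finite V\<close> assms(2) bound reach \<open>v \<in> V\<close>])
    have "\<bar>\<phi> v\<bar> = \<bar>\<phi> v\<bar> * exp R * exp (- R)" by (simp add: exp_minus)
    also have "\<dots> \<le> sup_norm V \<phi> * exp (- R)" using decay by (rule mult_right_mono) simp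
    also have "\<dots> = exp_neg (rho V Adj W E v) * sup_norm V \<phi>"
      by (simp add: rho_eq_min_path_cost[OF reach[OF \<open>v \<in> V\<close>]] R_def exp_neg_def)
    finally show ?thesis .
  qed
qed

end
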